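(* Let $n$ and $d$ be positive integers. Suppose there is a prime $q$ with $n/(d+1)<q<n/d$ and a prime power $p^a$ ($p$ prime, $a\ge1$) dividing $n$ such that $n-dq<p^a$. Then $n$ satisfies the $N$-variation of Condition 1 with $N=2+\lfloor d/2\rfloor$.
   Context: A positive integer $n$ satisfies the $N$-variation of Condition 1 if there exist $N$ different primes $p_1,\dots,p_N$ such that for every $1\le k\le n-1$, $\binom{n}{k}$ is divisible by at least one of $p_1,\dots,p_N$. *)

theory Defs
  imports Complex_Main "HOL-Computational_Algebra.Primes"
begin

definition condition1_var :: "nat \<Rightarrow> nat \<Rightarrow> bool" where
  "condition1_var N n \<longleftrightarrow>
     (\<exists>P :: nat set. finite P \<and> card P = N \<and> (\<forall>p\<in>P. prime p) \<and>
        (\<forall>k. 1 \<le> k \<and> k \<le> n - 1 \<longrightarrow> (\<exists>p\<in>P. p dvd (n choose k))))"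

end

theory Submission
  imports Defs
begin

text \<open>Write n = d q + r with r < q; the hypotheses say exactly that n div q = d and
  r < p^a. The prime p divides n choose k unless p^a divides k, and q divides it unless
  k mod q \<le> r. For the remaining exceptional k = j q + s (s \<le> r < p^a), divisibility
  by p^a forces j \<ge> 1 and makes k determined by j; moreover n - k is exceptional with
  quotient d - j. Since n choose k = n choose (n - k), the exceptional binomial
  coefficients take at most d div 2 values, all greater than 1. A prime factor of each,
  together with p and q, gives at most 2 + d div 2 primes, which is then padded to
  exactly that many.\<close>

lemma prime_dvd_binomial_if_not_prime_power_dvd:
  fixes p a n k :: nat
  assumes "prime p" "p ^ a dvd n" "\<not> p ^ a dvd k"
  shows "p dvd (n choose k)"
proof (rule ccontr)
  assume "\<not> p dvd (n choose k)"
  then have "coprime (p ^ a) (n choose k)"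
    using assms(1) by (simp add: prime_imp_coprime)
  moreover have "p ^ a dvd k * (n choose k)"
  proof (cases "k = 0")
    case False
    then show ?thesis using assms(2) by (simp add: times_binomial_minus1_eq)
  qed simp
  ultimately have "p ^ a dvd k" by (simp add: coprime_dvd_mult_left_iff)
  with assms(3) show False ..
qed

text \<open>The special case of Lucas' theorem where the last base-q digit of k exceeds that of n.\<close>
lemma prime_dvd_binomial_if_mod_less:
  fixes q n k :: nat
  assumes "prime q" "n mod q < k mod q"
  shows "q dvd (n choose k)"
  using assms(2)
proof (induction n arbitrary: k)
  case 0
  then show ?case by (cases k) simp_all
next
  case (Suc n)
  then obtain k' where k: "k = Suc k'" by (cases k) auto
  show ?case
  proof (cases "q dvd Suc n")
    case True
    with Suc.prems have "\<not> q ^ 1 dvd k" by (auto simp: mod_eq_0_iff_dvd)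
    with True show ?thesis
      using prime_dvd_binomial_if_not_prime_power_dvd[OF assms(1), of 1] by simp
  next
    case False
    then have "Suc n mod q = Suc (n mod q)" by (metis mod_Suc mod_eq_0_iff_dvd)
    moreover have "k mod q = Suc (k' mod q)"
      using Suc.prems k by (metis mod_Suc less_nat_zero_code)
    ultimately have "q dvd (n choose k')" "q dvd (n choose k)"
      using Suc.prems by (auto intro: Suc.IH)
    then show ?thesis using k by simp
  qed
qed

lemma div_pos_if_dvd_mod_less:
  fixes m k q :: nat
  assumes "m dvd k" "0 < k" "k mod q < m"
  shows "0 < k div q"
proof (rule ccontr)
  assume "\<not> 0 < k div q"
  then have "k mod q = k" by (metis div_mult_mod_eq mult_0 add_0 not_gr0)
  with assms show False by (metis dvd_imp_le not_le)
qed

lemma eq_if_dvd_mod_less_div_eq: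
  fixes m k l q :: nat
  assumes "m dvd k" "m dvd l" "k mod q < m" "l mod q < m" "k div q = l div q"
  shows "k = l"
proof -
  have "int k = int (k div q) * int q + int (k mod q)"
    and "int l = int (l div q) * int q + int (l mod q)"
    by (metis div_mult_mod_eq of_nat_add of_nat_mult)+
  then have "int k - int l = int (k mod q) - int (l mod q)"
    using assms(5) by simp
  then have "\<bar>int k - int l\<bar> < int m" using assms(3,4) by linarith
  moreover have "int m dvd int k - int l" using assms(1,2) by simp
  ultimately show ?thesis by (metis dvd_imp_le_int not_le eq_iff_diff_eq_0 abs_of_nat of_nat_eq_iff)
qed

lemma diff_div_mod_if_mod_le:
  fixes n k d q r :: nat
  assumes "n = d * q + r" "r < q" "k \<le> n" "k mod q \<le> r"
  shows "(n - k) div q = d - k div q" "(n - k) mod q = r - k mod q"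
proof -
  have "k div q \<le> d"
    using div_le_mono[OF assms(3), of q] assms(1,2) by simp
  then have "n - k = (d - k div q) * q + (r - k mod q)"
    using assms(1,4) div_mult_mod_eq[of k q] by (simp add: diff_mult_distrib)
  moreover have "r - k mod q < q" using assms(2) by linarith
  ultimately show "(n - k) div q = d - k div q" "(n - k) mod q = r - k mod q"
    by simp_all
qed

lemma exceptional_binomial_representatives:
  fixes n d q r m :: nat
  assumes n: "n = d * q + r" and "r < q" "r < m" "m dvd n"
  defines "B \<equiv> {k. 0 < k \<and> k < n \<and> m dvd k \<and> k mod q \<le> r}"
  obtains K where "K \<subseteq> B" "card K \<le> d div 2" "\<forall>k\<in>B. k \<in> K \<or> n - k \<in> K"
proof
  define K where "K = {k \<in> B. k div q \<le> d div 2}"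
  have reflect: "n - k \<in> B \<and> (n - k) div q = d - k div q" if "k \<in> B" for k
  proof -
    have k: "0 < k" "k < n" "m dvd k" "k mod q \<le> r" using that by (auto simp: B_def)
    then have "(n - k) div q = d - k div q" "(n - k) mod q = r - k mod q"
      using diff_div_mod_if_mod_le[OF n \<open>r < q\<close>] by simp_all
    then show ?thesis using k \<open>m dvd n\<close> by (auto simp: B_def)
  qed
  have div_pos: "0 < k div q" if "k \<in> B" for k
    using that \<open>r < m\<close> div_pos_if_dvd_mod_less[of m k q] by (simp add: B_def)
  have "inj_on (\<lambda>k. k div q) K"
  proof (rule inj_onI)
    fix k l assume "k \<in> K" "l \<in> K" "k div q = l div q"
    then show "k = l"
      using \<open>r < m\<close> eq_if_dvd_mod_less_div_eq[of m k l q] by (simp add: K_def B_def)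
  qed
  moreover have "(\<lambda>k. k div q) ` K \<subseteq> {1..d div 2}"
    using div_pos by (auto simp: K_def Suc_le_eq)
  ultimately have "card K \<le> card {1..d div 2}"
    by (metis card_image card_mono finite_atLeastAtMost)
  then show "card K \<le> d div 2" by simp
  show "K \<subseteq> B" by (simp add: K_def)
  show "\<forall>k\<in>B. k \<in> K \<or> n - k \<in> K"
    using reflect by (auto simp: K_def)
qed

lemma prime_divisors_cover:
  fixes f :: "'a \<Rightarrow> nat"
  assumes "finite K" "\<forall>k\<in>K. f k \<noteq> 1"
  obtains S where "finite S" "card S \<le> card K" "\<forall>p\<in>S. prime p" "\<forall>k\<in>K. \<exists>p\<in>S. p dvd f k"
proof
  define g where "g k = (SOME p. prime p \<and> p dvd f k)" for k
  have g: "prime (g k) \<and> g k dvd f k" if "k \<in> K" for k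
  proof -
    have "\<exists>p. prime p \<and> p dvd f k" using that assms(2) prime_factor_nat by blast
    then show ?thesis unfolding g_def by (rule someI_ex)
  qed
  show "finite (g ` K)" "card (g ` K) \<le> card K" using assms(1) by (simp_all add: card_image_le)
  show "\<forall>p\<in>g ` K. prime p" "\<forall>k\<in>K. \<exists>p\<in>g ` K. p dvd f k" using g by auto
qed

lemma binomial_prime_cover:
  fixes n d q r p a :: nat
  assumes "prime p" "prime q" "p ^ a dvd n" "n = d * q + r" "r < q" "r < p ^ a"
  obtains S where "finite S" "card S \<le> 2 + d div 2" "\<forall>s\<in>S. prime s"
    "\<forall>k. 0 < k \<and> k < n \<longrightarrow> (\<exists>s\<in>S. s dvd (n choose k))"
proof -
  define B where "B = {k. 0 < k \<and> k < n \<and> p ^ a dvd k \<and> k mod q \<le> r}"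
  obtain K where K: "K \<subseteq> B" "card K \<le> d div 2" "\<forall>k\<in>B. k \<in> K \<or> n - k \<in> K"
    using exceptional_binomial_representatives[OF assms(4-6,3)] unfolding B_def by blast
  have "finite K" using K(1) by (rule finite_subset) (auto simp: B_def)
  moreover have "\<forall>k\<in>K. n choose k \<noteq> 1"
  proof
    fix k assume "k \<in> K"
    then have "0 < k" "k < n" using K(1) by (auto simp: B_def)
    then show "n choose k \<noteq> 1" using upper_le_binomial[of k n] by simp
  qed
  ultimately obtain S where S: "finite S" "card S \<le> card K" "\<forall>s\<in>S. prime s"
      "\<forall>k\<in>K. \<exists>s\<in>S. s dvd (n choose k)"
    by (rule prime_divisors_cover)
  have "\<exists>s\<in>insert p (insert q S). s dvd (n choose k)" if "0 < k" "k < n" for k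
  proof (cases "k \<in> B")
    case True
    then have "k \<in> K \<or> n - k \<in> K" using K(3) by blast
    moreover have "n choose (n - k) = n choose k"
      using binomial_symmetric[of k n] \<open>k < n\<close> by simp
    ultimately show ?thesis using S(4) by (metis insert_iff)
  next
    case False
    then have "\<not> p ^ a dvd k \<or> n mod q < k mod q" using that assms(4,5) by (auto simp: B_def)
    then show ?thesis
      using prime_dvd_binomial_if_not_prime_power_dvd[OF assms(1,3)]
        prime_dvd_binomial_if_mod_less[OF assms(2)] by blast
  qed
  moreover have "card (insert p (insert q S)) \<le> 2 + d div 2"
    using S(1,2) K(2) by (simp add: card_insert_if)
  ultimately show ?thesis
    using S(1,3) assms(1,2) by (intro that[of "insert p (insert q S)"]) auto
qed

lemma condition1_var_if_prime_cover:
  fixes S :: "nat set"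
  assumes "finite S" "card S \<le> N" "\<forall>s\<in>S. prime s"
    "\<forall>k. 0 < k \<and> k < n \<longrightarrow> (\<exists>s\<in>S. s dvd (n choose k))"
  shows "condition1_var N n"
proof -
  have "infinite ({p::nat. prime p} - S)"
    using primes_infinite assms(1) by (simp add: Diff_infinite_finite)
  then obtain T where T: "T \<subseteq> {p. prime p} - S" "finite T" "card T = N - card S"
    using infinite_arbitrarily_large by blast
  have "card (S \<union> T) = N"
    using T assms(1,2) by (subst card_Un_disjoint) auto
  moreover have "\<forall>p\<in>S \<union> T. prime p" using T(1) assms(3) by blast
  moreover have "\<exists>p\<in>S \<union> T. p dvd (n choose k)" if "1 \<le> k" "k \<le> n - 1" for k
  proof -
    have "0 < k \<and> k < n" using that by arith
    then show ?thesis using assms(4) by blast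
  qed
  ultimately show ?thesis unfolding condition1_var_def using assms(1) T(2)
    by (intro exI[of _ "S \<union> T"]) blast
qed

theorem mainTheorem14:
  fixes n d q p a :: nat
  assumes "n > 0" and "d > 0"
    and "prime q"
    and "real n / real (d + 1) < real q" and "real q < real n / real d"
    and "prime p" and "a \<ge> 1" and "p ^ a dvd n"
    and "int n - int d * int q < int (p ^ a)"
  shows "condition1_var (2 + d div 2) n"
proof -
  have "real (q * d) < real n" "real n < real (q * Suc d)"
    using assms(2,4,5) by (simp_all add: field_simps)
  then have "q * d < n" "n < q * Suc d" by (simp_all only: of_nat_less_iff)
  then have "n div q = d" by (intro div_nat_eqI) simp_all
  define r where "r = n mod q"
  have n: "n = d * q + r"
    using \<open>n div q = d\<close> div_mult_mod_eq[of n q] by (simp add: r_def)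
  have "r < q" using assms(3) prime_gt_0_nat r_def by simp
  have "r < p ^ a" using assms(9) n by simp
  obtain S where "finite S" "card S \<le> 2 + d div 2" "\<forall>s\<in>S. prime s"
      "\<forall>k. 0 < k \<and> k < n \<longrightarrow> (\<exists>s\<in>S. s dvd (n choose k))"
    using binomial_prime_cover[OF assms(6,3,8) n \<open>r < q\<close> \<open>r < p ^ a\<close>] .
  then show ?thesis by (rule condition1_var_if_prime_cover)
qed

end
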